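(* Let $k$ be an odd positive integer. There are constants $c_0,c>0$ such that for every $0<\varepsilon\le c_0$ there is an $(\varepsilon,0)$-differentially private algorithm that, given any Max-$k$XOR instance $\Phi$, returns an assignment $x\in\{\pm1\}^n$ with $$\mathbb E[\mathrm{val}_\Phi(x)]\ \ge\ \left(\frac12+c\,\varepsilon\right)\mathrm{OPT},$$ where $\mathrm{OPT}$ is the number of constraints satisfied by an optimal assignment.
   Context: A Max-$k$XOR instance on variables $x_1,\dots,x_n\in\{\pm1\}$ consists of $m$ constraints, each with a scope $S_\ell\subseteq[n]$ of $k$ variables and a sign $b_\ell\in\{\pm1\}$, satisfied iff $b_\ell\prod_{i\in S_\ell}x_i=1$; scopes are assumed distinct as sets. $\mathrm{val}_\Phi(x)$ is the number of satisfied constraints. No triangle-freeness or degree bound is assumed. Neighboring instances differ by adding or removing one constraint ($n$ public); $(\varepsilon,0)$-DP means $\Pr[\mathcal M(\Phi)\in T]\le e^\varepsilon\Pr[\mathcal M(\Phi')\in T]$ for all neighbors and output sets $T$. *)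

theory Defs
  imports "HOL-Probability.Probability"
begin

text \<open>A constraint is a pair (S, b): scope S (a set of variable indices) and sign b in {-1,1}.
  Variables are indexed by {..<n}; an assignment is an element of {..<n} ->E {-1,1}.\<close>

type_synonym constraint = "nat set \<times> int"
type_synonym assignment = "nat \<Rightarrow> int"

definition assignments :: "nat \<Rightarrow> assignment set" where
  "assignments n = ({..<n} \<rightarrow>\<^sub>E {-1, 1})"

definition satisfies :: "assignment \<Rightarrow> constraint \<Rightarrow> bool" where
  "satisfies x c \<longleftrightarrow> snd c * (\<Prod>i\<in>fst c. x i) = 1"

definition kxor_instance :: "nat \<Rightarrow> nat \<Rightarrow> constraint set \<Rightarrow> bool" where
  "kxor_instance k n \<Phi> \<longleftrightarrow> finite \<Phi> \<and>
     (\<forall>c\<in>\<Phi>. fst c \<subseteq> {..<n} \<and> card (fst c) = k \<and> snd c \<in> {-1, 1}) \<and>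
     inj_on fst \<Phi>"

definition val :: "constraint set \<Rightarrow> assignment \<Rightarrow> nat" where
  "val \<Phi> x = card {c\<in>\<Phi>. satisfies x c}"

definition OPT :: "nat \<Rightarrow> constraint set \<Rightarrow> nat" where
  "OPT n \<Phi> = Max (val \<Phi> ` assignments n)"

definition neighbors :: "constraint set \<Rightarrow> constraint set \<Rightarrow> bool" where
  "neighbors \<Phi> \<Phi>' \<longleftrightarrow> (\<exists>c. c \<notin> \<Phi> \<and> \<Phi>' = insert c \<Phi>) \<or> (\<exists>c. c \<notin> \<Phi>' \<and> \<Phi> = insert c \<Phi>')"

definition pure_dp :: "nat \<Rightarrow> real \<Rightarrow> (nat \<Rightarrow> constraint set \<Rightarrow> assignment pmf) \<Rightarrow> bool" where
  "pure_dp k \<epsilon> M \<longleftrightarrow>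
     (\<forall>n \<Phi> \<Phi>' T. kxor_instance k n \<Phi> \<and> kxor_instance k n \<Phi>' \<and> neighbors \<Phi> \<Phi>' \<longrightarrow>
        measure_pmf.prob (M n \<Phi>) T \<le> exp \<epsilon> * measure_pmf.prob (M n \<Phi>') T)"

end

(* The exponential mechanism, which samples x with probability proportional to exp (eps * val x),
   does it.  Adding a constraint multiplies every weight by a factor in [1, exp eps], so the
   mechanism is (eps, 0)-private.  For the utility, Gibbs' variational inequality bounds
   ln of the mean weight by eps * E[val], and the mean weight is at least ((exp eps + 1) / 2)^OPT:
   shifting by an optimal assignment, the weight dominates a product, over the constraints
   it satisfies, of (exp eps + 1) / 2 + (exp eps - 1) / 2 * chi_S, and expanding this product
   leaves character sums over the group of sign vectors, which are nonnegative.  Finally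
   ln ((exp eps + 1) / 2) >= eps / 2 + eps^2 / 32 for eps <= 1. *)

theory Submission
  imports Defs
begin

definition gibbs :: "'a set \<Rightarrow> ('a \<Rightarrow> real) \<Rightarrow> 'a pmf" where
  "gibbs A w = embed_pmf (\<lambda>x. if x \<in> A then w x / sum w A else 0)"

context
  fixes A :: "'a set" and w :: "'a \<Rightarrow> real"
  assumes finite_A: "finite A" and A_ne: "A \<noteq> {}" and w_pos: "\<And>x. x \<in> A \<Longrightarrow> 0 < w x"
begin

lemma pmf_gibbs: "pmf (gibbs A w) x = (if x \<in> A then w x / sum w A else 0)"
proof -
  let ?f = "\<lambda>x. if x \<in> A then w x / sum w A else 0"
  have Z: "0 < sum w A" using finite_A A_ne w_pos by (intro sum_pos) auto
  have nonneg: "0 \<le> ?f x" for x using Z w_pos[of x] by auto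
  have "(\<integral>\<^sup>+x. ennreal (?f x) \<partial>count_space UNIV) = (\<integral>\<^sup>+x. ennreal (?f x) \<partial>count_space A)"
    by (subst nn_integral_count_space_indicator) (auto intro!: nn_integral_cong simp: indicator_def)
  also have "\<dots> = ennreal (\<Sum>x\<in>A. w x / sum w A)"
    using finite_A Z w_pos by (simp add: nn_integral_count_space_finite less_imp_le)
  also have "(\<Sum>x\<in>A. w x / sum w A) = 1"
    using Z by (simp flip: sum_divide_distrib)
  finally show ?thesis
    unfolding gibbs_def using pmf_embed_pmf[of ?f] nonneg by simp
qed

lemma set_pmf_gibbs: "set_pmf (gibbs A w) \<subseteq> A"
  by (auto simp: set_pmf_iff pmf_gibbs split: if_splits)

lemma prob_gibbs: "measure_pmf.prob (gibbs A w) T = (\<Sum>x\<in>T \<inter> A. w x / sum w A)"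
proof -
  have "measure_pmf.prob (gibbs A w) T = measure_pmf.prob (gibbs A w) (T \<inter> A)"
    using set_pmf_gibbs by (metis inf.absorb_iff2 inf_assoc measure_Int_set_pmf)
  also have "\<dots> = (\<Sum>x\<in>T \<inter> A. w x / sum w A)"
    using finite_A by (simp add: measure_measure_pmf_finite pmf_gibbs)
  finally show ?thesis .
qed

lemma expectation_gibbs:
  "measure_pmf.expectation (gibbs A w) f = (\<Sum>x\<in>A. w x / sum w A * f x)"
  using finite_A set_pmf_gibbs
  by (subst integral_measure_pmf_real[where A = A]) (auto simp: pmf_gibbs mult.commute)

text \<open>Gibbs' variational inequality: the Kullback-Leibler divergence of the Gibbs distribution
  from the uniform one is nonnegative (here via \<open>ln y \<le> y - 1\<close>).\<close>
lemma ln_mean_exp_le_expectation_gibbs: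
  assumes w_exp: "\<And>x. x \<in> A \<Longrightarrow> w x = exp (t * v x)"
  shows "ln (sum w A / card A) \<le> t * measure_pmf.expectation (gibbs A w) v"
proof -
  define Z where "Z = sum w A"
  define N where "N = real (card A)"
  have Z: "0 < Z" unfolding Z_def using finite_A A_ne w_pos by (intro sum_pos) auto
  have N: "0 < N" unfolding N_def using finite_A A_ne by (simp add: card_gt_0_iff)
  have pointwise: "w x / Z * (ln (Z / N) - t * v x) \<le> 1 / N - w x / Z" if x: "x \<in> A" for x
  proof -
    have wx: "0 < w x" using w_pos x .
    have "ln (Z / N) - t * v x = ln ((Z / N) / w x)"
      using Z N wx w_exp[OF x] by (simp add: ln_div ln_mult)
    also have "\<dots> \<le> (Z / N) / w x - 1"
      using Z N wx by (intro ln_le_minus_one) auto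
    finally have "w x / Z * (ln (Z / N) - t * v x) \<le> w x / Z * ((Z / N) / w x - 1)"
      using Z wx by (intro mult_left_mono) auto
    also have "\<dots> = 1 / N - w x / Z" using Z N wx by (simp add: field_simps)
    finally show ?thesis .
  qed
  have probs_sum: "(\<Sum>x\<in>A. w x / Z) = 1"
    using Z unfolding Z_def by (simp flip: sum_divide_distrib)
  have "ln (Z / N) - t * (\<Sum>x\<in>A. w x / Z * v x)
      = ln (Z / N) * (\<Sum>x\<in>A. w x / Z) - t * (\<Sum>x\<in>A. w x / Z * v x)"
    using probs_sum by simp
  also have "\<dots> = (\<Sum>x\<in>A. w x / Z * (ln (Z / N) - t * v x))"
    by (simp add: right_diff_distrib sum_subtractf sum_distrib_left sum_distrib_right mult_ac)
  also have "\<dots> \<le> (\<Sum>x\<in>A. 1 / N - w x / Z)"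
    using pointwise by (intro sum_mono)
  also have "\<dots> = 0" using N probs_sum unfolding N_def by (simp add: sum_subtractf)
  finally show ?thesis
    unfolding expectation_gibbs Z_def N_def by simp
qed

end

lemma prob_gibbs_le_if_weights_bounded:
  assumes "finite A" "A \<noteq> {}" "\<And>x. x \<in> A \<Longrightarrow> 0 < w x" "\<And>x. x \<in> A \<Longrightarrow> 0 < w' x"
    and w_le: "\<And>x. x \<in> A \<Longrightarrow> w x \<le> \<alpha> * w' x" and w'_le: "\<And>x. x \<in> A \<Longrightarrow> w' x \<le> \<beta> * w x"
    and "0 \<le> \<alpha>" "0 \<le> \<beta>"
  shows "measure_pmf.prob (gibbs A w) T \<le> \<alpha> * \<beta> * measure_pmf.prob (gibbs A w') T"
proof -
  have Z: "0 < sum w A" "0 < sum w' A" using assms(1-4) by (auto intro: sum_pos)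
  have "sum w' A \<le> \<beta> * sum w A"
    using w'_le by (simp add: sum_distrib_left sum_mono)
  then have inv_Z: "1 / sum w A \<le> \<beta> / sum w' A"
    using Z by (simp add: field_simps)
  have pointwise: "w x / sum w A \<le> \<alpha> * \<beta> * (w' x / sum w' A)" if x: "x \<in> A" for x
  proof -
    have "w x / sum w A \<le> \<alpha> * w' x * (1 / sum w A)"
      using w_le[OF x] Z by (simp add: divide_right_mono)
    also have "\<dots> \<le> \<alpha> * w' x * (\<beta> / sum w' A)"
      using inv_Z assms(4)[OF x] \<open>0 \<le> \<alpha>\<close> by (intro mult_left_mono) auto
    finally show ?thesis by (simp add: mult_ac)
  qed
  have "measure_pmf.prob (gibbs A w) T = (\<Sum>x\<in>T \<inter> A. w x / sum w A)"
    using assms(1-3) by (rule prob_gibbs)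
  also have "\<dots> \<le> (\<Sum>x\<in>T \<inter> A. \<alpha> * \<beta> * (w' x / sum w' A))"
    using pointwise by (intro sum_mono) auto
  also have "\<dots> = \<alpha> * \<beta> * measure_pmf.prob (gibbs A w') T"
    using assms(1,2,4) by (simp add: prob_gibbs sum_distrib_left)
  finally show ?thesis .
qed

context
  fixes A :: "'a set" and m :: "'a \<Rightarrow> 'a \<Rightarrow> 'a"
  assumes finite_A: "finite A" and bij_shift: "\<And>z. z \<in> A \<Longrightarrow> bij_betw (\<lambda>y. m y z) A A"
begin

lemma sum_multiplicative_nonneg:
  fixes g :: "'a \<Rightarrow> real"
  assumes mult: "\<And>y z. y \<in> A \<Longrightarrow> z \<in> A \<Longrightarrow> g (m y z) = g y * g z"
  shows "0 \<le> sum g A"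
proof -
  have "sum g A * sum g A = (\<Sum>z\<in>A. \<Sum>y\<in>A. g (m y z))"
    by (simp add: mult sum_distrib_left sum_distrib_right mult.commute)
  also have "\<dots> = (\<Sum>z\<in>A. sum g A)"
    using bij_shift by (intro sum.cong refl sum.reindex_bij_betw)
  also have "\<dots> = card A * sum g A" by simp
  finally have "sum g A * sum g A = card A * sum g A" .
  then have "sum g A = 0 \<or> sum g A = card A"
    by simp
  then show ?thesis by auto
qed

lemma sum_prod_affine_multiplicative_ge:
  fixes g :: "'i \<Rightarrow> 'a \<Rightarrow> real" and a d :: real
  assumes "finite I" "0 \<le> a" "0 \<le> d"
    and mult: "\<And>i y z. i \<in> I \<Longrightarrow> y \<in> A \<Longrightarrow> z \<in> A \<Longrightarrow> g i (m y z) = g i y * g i z"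
  shows "card A * a ^ card I \<le> (\<Sum>x\<in>A. \<Prod>i\<in>I. a + d * g i x)"
proof -
  let ?c = "\<lambda>B. d ^ card B * a ^ card (I - B)"
  have char_sum_nonneg: "0 \<le> (\<Sum>x\<in>A. \<Prod>i\<in>B. g i x)" if "B \<subseteq> I" for B
  proof (rule sum_multiplicative_nonneg)
    fix y z assume "y \<in> A" "z \<in> A"
    then have "(\<Prod>i\<in>B. g i (m y z)) = (\<Prod>i\<in>B. g i y * g i z)"
      using mult that by (intro prod.cong) auto
    then show "(\<Prod>i\<in>B. g i (m y z)) = (\<Prod>i\<in>B. g i y) * (\<Prod>i\<in>B. g i z)"
      by (simp add: prod.distrib)
  qed
  have "(\<Sum>x\<in>A. \<Prod>i\<in>I. d * g i x + a) = (\<Sum>x\<in>A. \<Sum>B\<in>Pow I. ?c B * (\<Prod>i\<in>B. g i x))"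
    using \<open>finite I\<close> by (simp add: prod_add prod.distrib mult_ac)
  also have "\<dots> = (\<Sum>B\<in>Pow I. ?c B * (\<Sum>x\<in>A. \<Prod>i\<in>B. g i x))"
    by (subst sum.swap) (simp add: sum_distrib_left)
  also have "\<dots> = ?c {} * card A + (\<Sum>B\<in>Pow I - {{}}. ?c B * (\<Sum>x\<in>A. \<Prod>i\<in>B. g i x))"
    using \<open>finite I\<close> by (subst sum.remove[of _ "{}"]) auto
  also have "\<dots> \<ge> ?c {} * card A"
    using assms by (intro add_increasing2 sum_nonneg mult_nonneg_nonneg char_sum_nonneg) auto
  finally show ?thesis by (simp add: add.commute mult.commute)
qed

end

lemma ln_half_exp_plus_one_ge:
  fixes e :: real
  assumes "0 \<le> e" "e \<le> 1"
  shows "e / 2 + e\<^sup>2 / 32 \<le> ln ((exp e + 1) / 2)"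
proof -
  define t where "t = exp (e / 2)"
  define u where "u = e\<^sup>2 / 16"
  have t_pos: "0 < t" and ln_t: "ln t = e / 2" by (simp_all add: t_def)
  have t_ge: "1 + e / 2 \<le> t" unfolding t_def using exp_ge_add_one_self[of "e / 2"] by simp
  have exp_e: "exp e = t\<^sup>2" unfolding t_def by (simp flip: exp_of_nat_mult)
  have "t\<^sup>2 \<le> exp 1" using assms by (simp add: exp_e [symmetric])
  also have "\<dots> < 2\<^sup>2" using exp_le by simp
  finally have t_le: "t \<le> 2" using power_less_imp_less_base[of t 2 2] by simp
  have u_nonneg: "0 \<le> u" and u_le_half: "u \<le> 1 / 2"
    using assms power_le_one[of e 2] by (simp_all add: u_def)
  have "u = (e / 2)\<^sup>2 / 4" unfolding u_def by (simp add: power_divide)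
  also have "\<dots> \<le> (t - 1)\<^sup>2 / 4" using t_ge assms by (intro divide_right_mono power_mono) auto
  also have "\<dots> \<le> (t - 1)\<^sup>2 / (2 * t)" using t_le t_pos by (intro divide_left_mono) auto
  finally have u_le: "u \<le> (t - 1)\<^sup>2 / (2 * t)" .
  have split: "(exp e + 1) / 2 = t * (1 + (t - 1)\<^sup>2 / (2 * t))"
    using t_pos by (simp add: exp_e field_simps power2_eq_square)
  have factor_pos: "0 < 1 + (t - 1)\<^sup>2 / (2 * t)" using t_pos by (simp add: add_pos_nonneg)
  have "e / 2 + e\<^sup>2 / 32 = ln t + u / 2" by (simp add: ln_t u_def)
  also have "\<dots> \<le> ln t + (u - u\<^sup>2)"
    using mult_left_mono[OF u_le_half u_nonneg] by (simp add: power2_eq_square)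
  also have "\<dots> \<le> ln t + ln (1 + u)"
    using u_nonneg u_le_half by (simp add: ln_one_plus_pos_lower_bound)
  also have "\<dots> \<le> ln t + ln (1 + (t - 1)\<^sup>2 / (2 * t))"
    using u_le u_nonneg by simp
  also have "\<dots> = ln ((exp e + 1) / 2)"
    using t_pos factor_pos unfolding split by (simp add: ln_mult)
  finally show ?thesis .
qed

definition assignment_mult :: "nat \<Rightarrow> assignment \<Rightarrow> assignment \<Rightarrow> assignment" where
  "assignment_mult n y z = restrict (\<lambda>i. y i * z i) {..<n}"

definition parity :: "assignment \<Rightarrow> nat set \<Rightarrow> int" where
  "parity x S = (\<Prod>i\<in>S. x i)"

lemma finite_assignments: "finite (assignments n)"
  unfolding assignments_def by (intro finite_PiE) auto

lemma assignments_nonempty: "assignments n \<noteq> {}"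
  unfolding assignments_def by (simp add: PiE_eq_empty_iff)

lemma assignment_value: "x \<in> assignments n \<Longrightarrow> i < n \<Longrightarrow> x i \<in> {-1, 1}"
  unfolding assignments_def by auto

lemma assignment_mult_in_assignments:
  assumes "y \<in> assignments n" "z \<in> assignments n"
  shows "assignment_mult n y z \<in> assignments n"
proof -
  have "y i * z i \<in> {-1, 1}" if "i < n" for i
    using assignment_value[OF assms(1) that] assignment_value[OF assms(2) that] by auto
  then show ?thesis unfolding assignments_def assignment_mult_def by (simp add: restrict_PiE_iff)
qed

lemma assignment_mult_cancel:
  assumes "y \<in> assignments n" "z \<in> assignments n"
  shows "assignment_mult n (assignment_mult n y z) z = y"
proof
  fix i
  show "assignment_mult n (assignment_mult n y z) z i = y i"
    using assignment_value[OF assms(2), of i] PiE_arb[OF assms(1)[unfolded assignments_def], of i]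
    by (auto simp: assignment_mult_def)
qed

lemma bij_betw_assignment_mult:
  assumes "z \<in> assignments n"
  shows "bij_betw (\<lambda>y. assignment_mult n y z) (assignments n) (assignments n)"
  using assms by (intro bij_betwI[where g = "\<lambda>y. assignment_mult n y z"])
    (auto simp: assignment_mult_in_assignments assignment_mult_cancel)

lemma parity_assignment_mult:
  assumes "S \<subseteq> {..<n}"
  shows "parity (assignment_mult n y z) S = parity y S * parity z S"
  using assms unfolding parity_def assignment_mult_def
  by (auto simp: prod.distrib[symmetric] intro!: prod.cong)

lemma parity_sign:
  assumes "x \<in> assignments n" "S \<subseteq> {..<n}"
  shows "parity x S \<in> {-1, 1}"
proof -
  have "\<bar>x i\<bar> = 1" if "i \<in> S" for i
    using assignment_value[OF assms(1), of i] assms(2) that by fastforce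
  then have "\<bar>parity x S\<bar> = 1" unfolding parity_def by (simp add: abs_prod)
  then show ?thesis by auto
qed

lemma satisfies_iff_parity_mult:
  assumes "x \<in> assignments n" "xs \<in> assignments n" "fst l \<subseteq> {..<n}" "snd l \<in> {-1, 1}"
    and "satisfies xs l"
  shows "satisfies x l \<longleftrightarrow> parity (assignment_mult n x xs) (fst l) = 1"
proof -
  have sat: "satisfies y l \<longleftrightarrow> snd l * parity y (fst l) = 1" for y
    unfolding satisfies_def parity_def ..
  have "snd l = parity xs (fst l)"
    using assms(4,5) parity_sign[OF assms(2,3)] sat by auto
  then show ?thesis
    using assms(4) parity_sign[OF assms(1,3)] sat parity_assignment_mult[OF assms(3)] by auto
qed

lemma val_sum: "finite \<Phi> \<Longrightarrow> real (val \<Phi> x) = (\<Sum>l\<in>\<Phi>. of_bool (satisfies x l))"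
  unfolding val_def by (simp add: Int_def conj_commute)

lemma val_mono: "finite \<Phi> \<Longrightarrow> G \<subseteq> \<Phi> \<Longrightarrow> val G x \<le> val \<Phi> x"
  unfolding val_def by (intro card_mono) auto

lemma val_insert:
  "finite \<Phi> \<Longrightarrow> c \<notin> \<Phi> \<Longrightarrow> real (val (insert c \<Phi>) x) = real (val \<Phi> x) + of_bool (satisfies x c)"
  by (simp add: val_sum)

lemma exp_val_eq_prod:
  fixes \<epsilon> :: real
  assumes "finite \<Phi>"
  shows "exp (\<epsilon> * val \<Phi> x) = (\<Prod>l\<in>\<Phi>. exp (\<epsilon> * of_bool (satisfies x l)))"
  unfolding val_sum[OF assms] sum_distrib_left using assms by (rule exp_sum)

lemma sum_exp_val_ge:
  fixes \<epsilon> :: real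
  assumes inst: "kxor_instance k n \<Phi>" and "0 \<le> \<epsilon>"
  shows "card (assignments n) * ((exp \<epsilon> + 1) / 2) ^ OPT n \<Phi>
           \<le> (\<Sum>x\<in>assignments n. exp (\<epsilon> * val \<Phi> x))"
proof -
  let ?A = "assignments n" and ?m = "assignment_mult n"
  define a where "a = (exp \<epsilon> + 1) / 2"
  define d where "d = (exp \<epsilon> - 1) / 2"
  have fin: "finite \<Phi>" and scope: "\<And>l. l \<in> \<Phi> \<Longrightarrow> fst l \<subseteq> {..<n} \<and> snd l \<in> {-1, 1}"
    using inst unfolding kxor_instance_def by auto
  have "OPT n \<Phi> \<in> val \<Phi> ` ?A"
    unfolding OPT_def using finite_assignments assignments_nonempty by (intro Max_in) auto
  then obtain xs where xs: "xs \<in> ?A" and opt: "val \<Phi> xs = OPT n \<Phi>" by auto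
  define G where "G = {l\<in>\<Phi>. satisfies xs l}"
  have G: "G \<subseteq> \<Phi>" "finite G" "card G = OPT n \<Phi>"
    using fin opt unfolding G_def val_def by auto
  \<comment> \<open>Shifting by the optimal \<open>xs\<close> makes the factor of each constraint satisfied by \<open>xs\<close>
    affine in a character.\<close>
  have factor: "exp (\<epsilon> * of_bool (satisfies x l)) = a + d * of_int (parity (?m x xs) (fst l))"
    if x: "x \<in> ?A" and l: "l \<in> G" for x l
  proof -
    have "l \<in> \<Phi>" "satisfies xs l" using l unfolding G_def by auto
    have "parity (?m x xs) (fst l) \<in> {-1, 1}"
      using parity_sign[OF assignment_mult_in_assignments[OF x xs]] scope[OF \<open>l \<in> \<Phi>\<close>] by auto
    moreover have "satisfies x l \<longleftrightarrow> parity (?m x xs) (fst l) = 1"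
      using satisfies_iff_parity_mult[OF x xs] scope[OF \<open>l \<in> \<Phi>\<close>] \<open>satisfies xs l\<close> by auto
    ultimately show ?thesis unfolding a_def d_def by (auto simp: field_simps)
  qed
  have "real (card ?A) * a ^ card G \<le> (\<Sum>y\<in>?A. \<Prod>l\<in>G. a + d * of_int (parity y (fst l)))"
  proof (rule sum_prod_affine_multiplicative_ge[where m = ?m])
    show "0 \<le> a" "0 \<le> d" using \<open>0 \<le> \<epsilon>\<close> by (simp_all add: a_def d_def)
    fix l y z assume "l \<in> G"
    then have "fst l \<subseteq> {..<n}" using G(1) scope by blast
    then show "real_of_int (parity (?m y z) (fst l)) = of_int (parity y (fst l)) * of_int (parity z (fst l))"
      by (simp add: parity_assignment_mult)
  qed (use G(2) finite_assignments bij_betw_assignment_mult in auto)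
  also have "\<dots> = (\<Sum>x\<in>?A. \<Prod>l\<in>G. a + d * of_int (parity (?m x xs) (fst l)))"
    using bij_betw_assignment_mult[OF xs] by (rule sum.reindex_bij_betw[symmetric])
  also have "\<dots> = (\<Sum>x\<in>?A. exp (\<epsilon> * val G x))"
    using G(2) factor by (simp add: exp_val_eq_prod)
  also have "\<dots> \<le> (\<Sum>x\<in>?A. exp (\<epsilon> * val \<Phi> x))"
    using fin G(1) val_mono \<open>0 \<le> \<epsilon>\<close> by (intro sum_mono) (simp add: mult_left_mono)
  finally show ?thesis unfolding a_def G(3) .
qed

definition exp_mechanism :: "real \<Rightarrow> nat \<Rightarrow> constraint set \<Rightarrow> assignment pmf" where
  "exp_mechanism \<epsilon> n \<Phi> = gibbs (assignments n) (\<lambda>x. exp (\<epsilon> * val \<Phi> x))"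

lemma set_pmf_exp_mechanism: "set_pmf (exp_mechanism \<epsilon> n \<Phi>) \<subseteq> assignments n"
  unfolding exp_mechanism_def
  using finite_assignments assignments_nonempty by (rule set_pmf_gibbs) simp

text \<open>Adding a constraint can only increase \<open>val\<close>, so all weights move in the same direction
  and the usual factor 2 in the privacy loss of the exponential mechanism is not incurred.\<close>
lemma exp_mechanism_insert_dp:
  fixes \<epsilon> :: real
  assumes "finite \<Phi>" "c \<notin> \<Phi>" "0 \<le> \<epsilon>"
  shows "measure_pmf.prob (exp_mechanism \<epsilon> n \<Phi>) T
           \<le> exp \<epsilon> * measure_pmf.prob (exp_mechanism \<epsilon> n (insert c \<Phi>)) T"
    and "measure_pmf.prob (exp_mechanism \<epsilon> n (insert c \<Phi>)) T
           \<le> exp \<epsilon> * measure_pmf.prob (exp_mechanism \<epsilon> n \<Phi>) T"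
proof -
  define w where "w x = exp (\<epsilon> * val \<Phi> x)" for x
  define w' where "w' x = exp (\<epsilon> * val (insert c \<Phi>) x)" for x
  have w': "w' x = w x * exp (\<epsilon> * of_bool (satisfies x c))" for x
    using assms(1,2) by (simp add: w_def w'_def val_insert distrib_left exp_add)
  have pos: "0 < w x" "0 < w' x" for x by (simp_all add: w_def w'_def)
  have lower: "w x \<le> 1 * w' x" and upper: "w' x \<le> exp \<epsilon> * w x" for x
    unfolding w' using assms(3) by (auto simp: w_def)
  have "measure_pmf.prob (gibbs (assignments n) w) T
          \<le> 1 * exp \<epsilon> * measure_pmf.prob (gibbs (assignments n) w') T"
    and "measure_pmf.prob (gibbs (assignments n) w') T
          \<le> exp \<epsilon> * 1 * measure_pmf.prob (gibbs (assignments n) w) T"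
    using finite_assignments assignments_nonempty pos lower upper
    by (intro prob_gibbs_le_if_weights_bounded; simp)+
  then show "measure_pmf.prob (exp_mechanism \<epsilon> n \<Phi>) T
           \<le> exp \<epsilon> * measure_pmf.prob (exp_mechanism \<epsilon> n (insert c \<Phi>)) T"
    and "measure_pmf.prob (exp_mechanism \<epsilon> n (insert c \<Phi>)) T
           \<le> exp \<epsilon> * measure_pmf.prob (exp_mechanism \<epsilon> n \<Phi>) T"
    unfolding exp_mechanism_def w_def w'_def by simp_all
qed

lemma pure_dp_exp_mechanism: "0 \<le> \<epsilon> \<Longrightarrow> pure_dp k \<epsilon> (exp_mechanism \<epsilon>)"
  unfolding pure_dp_def neighbors_def kxor_instance_def
  by (auto intro: exp_mechanism_insert_dp)

lemma expectation_exp_mechanism_ge: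
  assumes inst: "kxor_instance k n \<Phi>" and "0 < \<epsilon>" "\<epsilon> \<le> 1"
  shows "(1 / 2 + \<epsilon> / 32) * OPT n \<Phi> \<le> measure_pmf.expectation (exp_mechanism \<epsilon> n \<Phi>) (\<lambda>x. val \<Phi> x)"
proof -
  let ?A = "assignments n" and ?E = "measure_pmf.expectation (exp_mechanism \<epsilon> n \<Phi>) (\<lambda>x. val \<Phi> x)"
  define a where "a = (exp \<epsilon> + 1) / 2"
  have a_pos: "0 < a" unfolding a_def by (simp add: add_pos_pos)
  have N_pos: "0 < real (card ?A)"
    using finite_assignments assignments_nonempty by (simp add: card_gt_0_iff)
  have "\<epsilon> * (1 / 2 + \<epsilon> / 32) \<le> ln a"
    using ln_half_exp_plus_one_ge[of \<epsilon>] assms(2,3) unfolding a_def by (simp add: power2_eq_square algebra_simps)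
  then have "\<epsilon> * ((1 / 2 + \<epsilon> / 32) * OPT n \<Phi>) \<le> OPT n \<Phi> * ln a"
    using mult_right_mono[of "\<epsilon> * (1 / 2 + \<epsilon> / 32)" "ln a" "real (OPT n \<Phi>)"] by (simp add: mult_ac)
  also have "\<dots> = ln (a ^ OPT n \<Phi>)" using a_pos by (simp add: ln_realpow)
  also have "\<dots> \<le> ln ((\<Sum>x\<in>?A. exp (\<epsilon> * val \<Phi> x)) / card ?A)"
    using sum_exp_val_ge[OF inst, of \<epsilon>] a_pos N_pos assms(2) unfolding a_def
    by (intro ln_mono) (auto simp: pos_le_divide_eq mult.commute)
  also have "\<dots> \<le> \<epsilon> * ?E"
    unfolding exp_mechanism_def
    using finite_assignments assignments_nonempty by (rule ln_mean_exp_le_expectation_gibbs) auto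
  finally show ?thesis using assms(2) by simp
qed

theorem corollary4p6:
  fixes k :: nat
  assumes "odd k"
  shows "\<exists>c0 c :: real. c0 > 0 \<and> c > 0 \<and>
    (\<forall>\<epsilon>. 0 < \<epsilon> \<and> \<epsilon> \<le> c0 \<longrightarrow>
      (\<exists>M :: nat \<Rightarrow> constraint set \<Rightarrow> assignment pmf.
         pure_dp k \<epsilon> M \<and>
         (\<forall>n \<Phi>. kxor_instance k n \<Phi> \<longrightarrow>
            set_pmf (M n \<Phi>) \<subseteq> assignments n \<and>
            measure_pmf.expectation (M n \<Phi>) (\<lambda>x. real (val \<Phi> x))
              \<ge> (1/2 + c * \<epsilon>) * real (OPT n \<Phi>))))"
proof -
  have "pure_dp k \<epsilon> (exp_mechanism \<epsilon>) \<and>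
      (\<forall>n \<Phi>. kxor_instance k n \<Phi> \<longrightarrow>
         set_pmf (exp_mechanism \<epsilon> n \<Phi>) \<subseteq> assignments n \<and>
         (1 / 2 + \<epsilon> / 32) * OPT n \<Phi> \<le> measure_pmf.expectation (exp_mechanism \<epsilon> n \<Phi>) (\<lambda>x. val \<Phi> x))"
    if "0 < \<epsilon>" "\<epsilon> \<le> 1" for \<epsilon> :: real
    using that pure_dp_exp_mechanism set_pmf_exp_mechanism expectation_exp_mechanism_ge by auto
  then show ?thesis by (intro exI[of _ "1 :: real"] exI[of _ "1 / 32 :: real"]) force
qed

end
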